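(* Assume $J$ satisfies (J1), (J2), (J3), (J4) and $h$ satisfies (h1), (h2). Let $u$ be a minimizer for $H$ in $Q_\ell(q)$, for some $q\in\mathbb Z^d$ and $\ell\in\mathbb N$. Then $$H_{Q_\ell(q)}(u)\le\bar C\,\ell^{d-1}\Big(1+\sum_{m=1}^{\ell}\sigma(m)\Big),$$ for a constant $\bar C\ge1$ depending only on $d$, $\mu$ and $\tau$. Moreover, if $h$ vanishes in $Q_\ell(q)$, $\bar C$ may be chosen depending only on $d$.
   Context: Fix $d\ge2$, $|x|:=\sum_n|x_n|$, $|x|_\infty:=\max_n|x_n|$. Configurations are maps $u:\mathbb Z^d\to\{-1,1\}$. Given $J:\mathbb Z^d\times\mathbb Z^d\to[0,\infty)$ and $h:\mathbb Z^d\to\mathbb R$, for finite $\Gamma$: $H_\Gamma(u):=\sum_{(i,j)\in\mathbb Z^{2d}\setminus(\mathbb Z^d\setminus\Gamma)^2}J_{ij}(1-u_iu_j)+\sum_{i\in\Gamma}h_iu_i$; $u$ is a minimizer for $H$ in $\Gamma$ if $H_\Gamma(u)\le H_\Gamma(v)$ for all configurations $v$ agreeing with $u$ outside $\Gamma$. $Q_\ell(q):=\{i\in\mathbb Z^d:|i-q|_\infty\le\ell\}$. Conditions (constants $\Lambda\ge\lambda>0$, $\mu>0$, $\tau\in\mathbb N$): (J1) $J_{ij}=J_{ji}$; (J2) $J_{ii}=0$; (J3) $J_{ij}\ge\lambda$ if $|i-j|=1$; (J4) $\sum_jJ_{ij}\le\Lambda$ for all $i$; (h1) $\sup_i|h_i|\le\mu$;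 (h2) $\sum_{i\in F}h_i=0$ for every fundamental domain $F$ (set of representatives) of $\mathbb Z^d/\tau\mathbb Z^d$. For $R\in\mathbb N$, $\sigma(R):=\sup_{i\in\mathbb Z^d}\sum_{j:\,|j-i|_\infty\ge R}J_{ij}$. *)

theory Defs
  imports "HOL-Analysis.Analysis"
begin

text \<open>Points of Z^d are integer vectors indexed by a finite type 'd (d = CARD('d)).\<close>

definition l1norm :: "int ^ 'd::finite \<Rightarrow> int" where
  "l1norm x = (\<Sum>k\<in>UNIV. \<bar>x $ k\<bar>)"

definition linfnorm :: "int ^ 'd::finite \<Rightarrow> int" where
  "linfnorm x = Max (range (\<lambda>k. \<bar>x $ k\<bar>))"

definition config :: "(int ^ 'd::finite \<Rightarrow> real) \<Rightarrow> bool" where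
  "config u \<longleftrightarrow> (\<forall>i. u i \<in> {-1, 1})"

definition Ham :: "(int ^ 'd::finite \<Rightarrow> int ^ 'd \<Rightarrow> real) \<Rightarrow> (int ^ 'd \<Rightarrow> real)
    \<Rightarrow> (int ^ 'd) set \<Rightarrow> (int ^ 'd \<Rightarrow> real) \<Rightarrow> real" where
  "Ham J h \<Gamma> u =
     infsum (\<lambda>(i, j). J i j * (1 - u i * u j)) (UNIV - (- \<Gamma>) \<times> (- \<Gamma>))
     + (\<Sum>i\<in>\<Gamma>. h i * u i)"

definition minimizer :: "(int ^ 'd::finite \<Rightarrow> int ^ 'd \<Rightarrow> real) \<Rightarrow> (int ^ 'd \<Rightarrow> real)
    \<Rightarrow> (int ^ 'd) set \<Rightarrow> (int ^ 'd \<Rightarrow> real) \<Rightarrow> bool" where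
  "minimizer J h \<Gamma> u \<longleftrightarrow> config u \<and>
     (\<forall>v. config v \<longrightarrow> (\<forall>i. i \<notin> \<Gamma> \<longrightarrow> v i = u i) \<longrightarrow> Ham J h \<Gamma> u \<le> Ham J h \<Gamma> v)"

definition cube :: "nat \<Rightarrow> int ^ 'd::finite \<Rightarrow> (int ^ 'd) set" where
  "cube l q = {i. linfnorm (i - q) \<le> int l}"

definition fundamental_domain :: "nat \<Rightarrow> (int ^ 'd::finite) set \<Rightarrow> bool" where
  "fundamental_domain \<tau> F \<longleftrightarrow>
     (\<forall>x. \<exists>!y. y \<in> F \<and> (\<forall>k. x $ k mod int \<tau> = y $ k mod int \<tau>))"

definition sigmaJ :: "(int ^ 'd::finite \<Rightarrow> int ^ 'd \<Rightarrow> real) \<Rightarrow> nat \<Rightarrow> real" where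
  "sigmaJ J R = (SUP i. infsum (\<lambda>j. J i j) {j. linfnorm (j - i) \<ge> int R})"

definition kernel_ok :: "real \<Rightarrow> real \<Rightarrow> (int ^ 'd::finite \<Rightarrow> int ^ 'd \<Rightarrow> real) \<Rightarrow> bool" where
  "kernel_ok lam Lam J \<longleftrightarrow>
     (\<forall>i j. J i j \<ge> 0) \<and>
     (\<forall>i j. J i j = J j i) \<and>
     (\<forall>i. J i i = 0) \<and>
     (\<forall>i j. l1norm (i - j) = 1 \<longrightarrow> J i j \<ge> lam) \<and>
     (\<forall>i. (\<lambda>j. J i j) summable_on UNIV \<and> infsum (\<lambda>j. J i j) UNIV \<le> Lam)"

definition field_ok :: "real \<Rightarrow> nat \<Rightarrow> (int ^ 'd::finite \<Rightarrow> real) \<Rightarrow> bool" where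
  "field_ok \<mu> \<tau> h \<longleftrightarrow>
     (\<forall>i. \<bar>h i\<bar> \<le> \<mu>) \<and>
     (\<forall>F. fundamental_domain \<tau> F \<longrightarrow> sum h F = 0)"

end

theory Submission
  imports Defs
begin

text \<open>Compare the minimizer u with the competitor that equals a constant sign s on the cube Q
  and u outside. Choosing s against the sign of the total field on Q makes the field term
  nonpositive. Pairs inside
  Q then cost nothing, and every other pair costs at most 2 J_ij, so the energy is at most four
  times the boundary interaction of Q. A site i of Q interacts with a site j outside Q only if
  some coordinate c of j leaves the range of Q, which forces the l\<infinity>-distance of i and j to be at
  least l + 1 - |i_c - q_c|; summing the resulting tail bounds sigma over the at most
  4 (2l + 1)^(d-1) sites of each depth gives the estimate.\<close>

lemma abs_component_le_linfnorm: "\<bar>x $ k\<bar> \<le> linfnorm x"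
  unfolding linfnorm_def by (rule Max_ge) auto

lemma linfnorm_attained: "\<exists>k. linfnorm x = \<bar>x $ k\<bar>"
proof -
  have "Max (range (\<lambda>k. \<bar>x $ k\<bar>)) \<in> range (\<lambda>k. \<bar>x $ k\<bar>)" by (rule Max_in) auto
  then show ?thesis unfolding linfnorm_def by blast
qed

lemma abs_component_diff_le_if_in_cube: "i \<in> cube l q \<Longrightarrow> \<bar>i $ k - q $ k\<bar> \<le> int l"
  unfolding cube_def using abs_component_le_linfnorm[of "i - q" k] by auto

lemma finite_cube: "finite (cube l q)"
proof -
  let ?B = "PiE UNIV (\<lambda>k. {q $ k - int l .. q $ k + int l})"
  have "inj_on (\<lambda>i k. i $ k) (cube l q)" by (auto simp: inj_on_def vec_eq_iff)
  moreover have "i $ k \<in> {q $ k - int l .. q $ k + int l}" if "i \<in> cube l q" for i k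
    using abs_component_diff_le_if_in_cube[OF that, of k] by (simp add: abs_le_iff)
  then have "(\<lambda>i k. i $ k) ` cube l q \<subseteq> ?B" by (auto simp: PiE_iff)
  moreover have "finite ?B" by (rule finite_PiE) auto
  ultimately show ?thesis using inj_on_finite by blast
qed

lemma card_cube_slice_le:
  fixes q :: "int ^ 'd::finite"
  shows "card {i \<in> cube l q. i $ c - q $ c = t} \<le> (2 * l + 1) ^ (CARD('d) - 1)"
proof -
  let ?A = "{i \<in> cube l q. i $ c - q $ c = t}"
  let ?B = "PiE (UNIV - {c}) (\<lambda>_. {- int l .. int l})"
  let ?f = "\<lambda>i. restrict (\<lambda>k. i $ k - q $ k) (UNIV - {c})"
  have "inj_on ?f ?A"
  proof (rule inj_onI)
    fix i j assume "i \<in> ?A" "j \<in> ?A" and eq: "?f i = ?f j"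
    have "i $ k = j $ k" for k
    proof (cases "k = c")
      case False
      then show ?thesis using fun_cong[OF eq, of k] by simp
    qed (use \<open>i \<in> ?A\<close> \<open>j \<in> ?A\<close> in simp)
    then show "i = j" by (simp add: vec_eq_iff)
  qed
  moreover have "i $ k - q $ k \<in> {- int l .. int l}" if "i \<in> cube l q" for i k
    using abs_component_diff_le_if_in_cube[OF that, of k] by (simp add: abs_le_iff)
  then have "?f ` ?A \<subseteq> ?B" by (force simp: PiE_iff)
  moreover have "finite ?B" by (rule finite_PiE) auto
  ultimately have "card ?A \<le> card ?B" by (rule card_inj_on_le)
  also have "card ?B = (2 * l + 1) ^ (CARD('d) - 1)"
    by (simp add: card_PiE card_Diff_singleton nat_add_distrib nat_mult_distrib)
  finally show ?thesis .
qed

text \<open>For a site of the cube with offset t in some coordinate, every site outside the cube that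
  leaves it through this coordinate is at l\<infinity>-distance at least l + 1 - |t| \<ge> cube_depth l t.\<close>

definition cube_depth :: "nat \<Rightarrow> int \<Rightarrow> nat" where
  "cube_depth l t = nat (max 1 (int l - \<bar>t\<bar>))"

lemma card_cube_depth_fibre_le:
  fixes q :: "int ^ 'd::finite"
  shows "card {i \<in> cube l q. cube_depth l (i $ c - q $ c) = m} \<le> 4 * (2 * l + 1) ^ (CARD('d) - 1)"
proof -
  let ?T = "{int l - int m, int m - int l, int l, - int l}"
  let ?slice = "\<lambda>t. {i \<in> cube l q. i $ c - q $ c = t}"
  have "i $ c - q $ c \<in> ?T" if "i \<in> cube l q" "cube_depth l (i $ c - q $ c) = m" for i
    using that abs_component_diff_le_if_in_cube[OF that(1), of c]
    by (auto simp: cube_depth_def abs_if max_def split: if_splits)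
  then have "{i \<in> cube l q. cube_depth l (i $ c - q $ c) = m} \<subseteq> (\<Union>t\<in>?T. ?slice t)"
    by blast
  then have "card {i \<in> cube l q. cube_depth l (i $ c - q $ c) = m} \<le> card (\<Union>t\<in>?T. ?slice t)"
    by (intro card_mono) (auto intro: finite_subset[OF _ finite_cube])
  also have "\<dots> \<le> (\<Sum>t\<in>?T. card (?slice t))"
    by (rule card_UN_le) simp
  also have "\<dots> \<le> card ?T * (2 * l + 1) ^ (CARD('d) - 1)"
    using sum_bounded_above[of ?T "\<lambda>t. card (?slice t)"] card_cube_slice_le[of l q c] by auto
  also have "card ?T \<le> 4"
    using card_length[of "[int l - int m, int m - int l, int l, - int l]"] by simp
  finally show ?thesis by simp
qed

lemma sum_cube_depth_le:
  fixes q :: "int ^ 'd::finite" and F :: "nat \<Rightarrow> real"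
  assumes F: "\<And>m. 0 \<le> F m" and "l \<ge> 1"
  shows "(\<Sum>i\<in>cube l q. F (cube_depth l (i $ c - q $ c)))
    \<le> 4 * (2 * real l + 1) ^ (CARD('d) - 1) * (\<Sum>m=1..l. F m)"
proof -
  let ?depth = "\<lambda>i. cube_depth l (i $ c - q $ c)"
  let ?N = "4 * (2 * real l + 1) ^ (CARD('d) - 1)"
  have depth_range: "?depth ` cube l q \<subseteq> {1..l}"
    using abs_component_diff_le_if_in_cube[of _ l q c] \<open>l \<ge> 1\<close> by (auto simp: cube_depth_def)
  have "(\<Sum>i\<in>cube l q. F (?depth i))
      = (\<Sum>m=1..l. \<Sum>i\<in>{i \<in> cube l q. ?depth i = m}. F (?depth i))"
    by (rule sum.group[symmetric, OF finite_cube _ depth_range]) simp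
  also have "\<dots> = (\<Sum>m=1..l. real (card {i \<in> cube l q. ?depth i = m}) * F m)"
    by simp
  also have "\<dots> \<le> (\<Sum>m=1..l. ?N * F m)"
  proof (intro sum_mono mult_right_mono F)
    fix m
    have "real (card {i \<in> cube l q. ?depth i = m}) \<le> real (4 * (2 * l + 1) ^ (CARD('d) - 1))"
      using card_cube_depth_fibre_le by (subst of_nat_le_iff) blast
    then show "real (card {i \<in> cube l q. ?depth i = m}) \<le> ?N" by (simp add: add.commute)
  qed
  also have "\<dots> = ?N * (\<Sum>m=1..l. F m)"
    by (simp add: sum_distrib_left)
  finally show ?thesis .
qed

lemma kernel_ok_nonneg: "kernel_ok lam Lam J \<Longrightarrow> 0 \<le> J i j"
  unfolding kernel_ok_def by blast

lemma kernel_ok_sym: "kernel_ok lam Lam J \<Longrightarrow> J i j = J j i"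
  unfolding kernel_ok_def by blast

lemma kernel_ok_summable_on: "kernel_ok lam Lam J \<Longrightarrow> J i summable_on E"
  unfolding kernel_ok_def by (metis summable_on_subset subset_UNIV)

lemma kernel_ok_infsum_mono:
  "kernel_ok lam Lam J \<Longrightarrow> E \<subseteq> E' \<Longrightarrow> infsum (J i) E \<le> infsum (J i) E'"
  by (rule infsum_mono_neutral) (auto intro: kernel_ok_summable_on kernel_ok_nonneg)

lemma kernel_ok_infsum_le:
  assumes "kernel_ok lam Lam J"
  shows "infsum (J i) E \<le> Lam"
proof -
  have "infsum (J i) E \<le> infsum (J i) UNIV" by (rule kernel_ok_infsum_mono[OF assms]) simp
  also have "\<dots> \<le> Lam" using assms unfolding kernel_ok_def by blast
  finally show ?thesis .
qed

lemma kernel_ok_infsum_Un_le: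
  assumes "kernel_ok lam Lam J"
  shows "infsum (J i) (A \<union> B) \<le> infsum (J i) A + infsum (J i) B"
proof -
  have "infsum (J i) (A \<union> B) = infsum (J i) A + infsum (J i) (B - A)"
    using infsum_Un_disjoint[of "J i" A "B - A"] kernel_ok_summable_on[OF assms] by simp
  also have "\<dots> \<le> infsum (J i) A + infsum (J i) B"
    using kernel_ok_infsum_mono[OF assms, of "B - A" B] by simp
  finally show ?thesis .
qed

lemma kernel_ok_infsum_UN_le:
  assumes "kernel_ok lam Lam J" and "finite C"
  shows "infsum (J i) (\<Union>c\<in>C. E c) \<le> (\<Sum>c\<in>C. infsum (J i) (E c))"
  using \<open>finite C\<close>
proof (induction C rule: finite_induct)
  case (insert x C)
  then show ?case
    using kernel_ok_infsum_Un_le[OF assms(1), of i "E x" "\<Union>c\<in>C. E c"] by simp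
qed simp

lemma infsum_le_sigmaJ:
  "kernel_ok lam Lam J \<Longrightarrow> infsum (J i) {j. linfnorm (j - i) \<ge> int m} \<le> sigmaJ J m"
  unfolding sigmaJ_def
  by (rule cSUP_upper[where f = "\<lambda>i. infsum (J i) {j. linfnorm (j - i) \<ge> int m}"])
     (auto intro!: bdd_aboveI2 kernel_ok_infsum_le)

lemma sigmaJ_nonneg: "kernel_ok lam Lam J \<Longrightarrow> 0 \<le> sigmaJ J m"
  by (rule order_trans[OF infsum_nonneg infsum_le_sigmaJ]) (auto intro: kernel_ok_nonneg)

lemma infsum_outside_cube_le:
  fixes q :: "int ^ 'd::finite"
  assumes J: "kernel_ok lam Lam J" and i: "i \<in> cube l q"
  shows "infsum (J i) (- cube l q) \<le> (\<Sum>c\<in>UNIV. sigmaJ J (cube_depth l (i $ c - q $ c)))"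
proof -
  let ?exit = "\<lambda>c. {j. \<bar>j $ c - q $ c\<bar> > int l}"
  have "- cube l q \<subseteq> (\<Union>c. ?exit c)"
  proof
    fix j assume "j \<in> - cube l q"
    moreover obtain c where "linfnorm (j - q) = \<bar>(j - q) $ c\<bar>" using linfnorm_attained by blast
    ultimately show "j \<in> (\<Union>c. ?exit c)" by (auto simp: cube_def not_le)
  qed
  then have "infsum (J i) (- cube l q) \<le> infsum (J i) (\<Union>c. ?exit c)"
    by (rule kernel_ok_infsum_mono[OF J])
  also have "\<dots> \<le> (\<Sum>c\<in>UNIV. infsum (J i) (?exit c))"
    by (rule kernel_ok_infsum_UN_le[OF J]) simp
  also have "\<dots> \<le> (\<Sum>c\<in>UNIV. sigmaJ J (cube_depth l (i $ c - q $ c)))"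
  proof (rule sum_mono)
    fix c
    let ?m = "cube_depth l (i $ c - q $ c)"
    have "int ?m \<le> linfnorm (j - i)" if "j \<in> ?exit c" for j
      using that abs_component_diff_le_if_in_cube[OF i, of c] abs_component_le_linfnorm[of "j - i" c]
      by (auto simp: cube_depth_def)
    then have "infsum (J i) (?exit c) \<le> infsum (J i) {j. linfnorm (j - i) \<ge> int ?m}"
      by (intro kernel_ok_infsum_mono[OF J]) auto
    also have "\<dots> \<le> sigmaJ J ?m" by (rule infsum_le_sigmaJ[OF J])
    finally show "infsum (J i) (?exit c) \<le> sigmaJ J ?m" .
  qed
  finally show ?thesis .
qed

lemma has_sum_Sigma_finite:
  fixes f :: "'a \<times> 'b \<Rightarrow> real"
  assumes "finite A" and "\<And>i. i \<in> A \<Longrightarrow> ((\<lambda>j. f (i, j)) has_sum g i) (B i)"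
  shows "(f has_sum sum g A) (Sigma A B)"
proof -
  have "(f has_sum g i) (Pair i ` B i)" if "i \<in> A" for i
    using has_sum_reindex[of "Pair i" "B i" f "g i"] assms(2)[OF that]
    by (simp add: inj_on_def comp_def)
  then have "(f has_sum sum g A) (\<Union>i\<in>A. Pair i ` B i)"
    by (intro sum_has_sum[OF \<open>finite A\<close>]) auto
  moreover have "Sigma A B = (\<Union>i\<in>A. Pair i ` B i)" by auto
  ultimately show ?thesis by simp
qed

lemma Ham_constant_on_le:
  assumes J: "kernel_ok lam Lam J" and "finite \<Gamma>" and u: "config u" and s: "s = 1 \<or> s = -1"
  defines "v \<equiv> \<lambda>i. if i \<in> \<Gamma> then s else u i"
  shows "Ham J h \<Gamma> v \<le> 4 * (\<Sum>i\<in>\<Gamma>. infsum (J i) (- \<Gamma>)) + s * sum h \<Gamma>"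
proof -
  define f where "f = (\<lambda>(i, j). J i j * (1 - v i * v j))"
  have sign: "v i = 1 \<or> v i = -1" for i using u s unfolding v_def config_def by auto
  have f_bounds: "0 \<le> f (i, j)" "f (i, j) \<le> 2 * J i j" for i j
    using sign[of i] sign[of j] kernel_ok_nonneg[OF J, of i j] unfolding f_def by auto
  have f_inside: "f (i, j) = 0" if "i \<in> \<Gamma>" "j \<in> \<Gamma>" for i j
    using that s unfolding f_def v_def by auto
  have f_bound': "f (j, i) \<le> 2 * J i j" for i j
    using f_bounds(2)[of j i] kernel_ok_sym[OF J, of j i] by simp
  have J2: "(\<lambda>j. 2 * J i j) summable_on E" for i E
    by (intro summable_on_cmult_right kernel_ok_summable_on[OF J])
  have row: "(\<lambda>j. f (i, j)) summable_on E" and col: "(\<lambda>j. f (j, i)) summable_on E" for i E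
    using f_bounds f_bound' by (auto intro!: summable_on_comparison_test[OF J2])
  define row_sum where "row_sum i = infsum (\<lambda>j. f (i, j)) UNIV" for i
  define col_sum where "col_sum i = infsum (\<lambda>j. f (j, i)) (- \<Gamma>)" for i
  have row_sum_le: "row_sum i \<le> 2 * infsum (J i) (- \<Gamma>)" if "i \<in> \<Gamma>" for i
  proof -
    have "row_sum i \<le> infsum (\<lambda>j. 2 * J i j) (- \<Gamma>)"
      unfolding row_sum_def
      by (rule infsum_mono_neutral[OF row J2]) (auto simp: f_bounds f_inside that)
    then show ?thesis by (simp add: infsum_cmult_right kernel_ok_summable_on[OF J])
  qed
  have col_sum_le: "col_sum i \<le> 2 * infsum (J i) (- \<Gamma>)" for i
  proof -
    have "col_sum i \<le> infsum (\<lambda>j. 2 * J i j) (- \<Gamma>)"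
      unfolding col_sum_def by (rule infsum_mono[OF col J2 f_bound'])
    then show ?thesis by (simp add: infsum_cmult_right kernel_ok_summable_on[OF J])
  qed
  have "(f has_sum sum row_sum \<Gamma>) (\<Gamma> \<times> UNIV)"
    by (rule has_sum_Sigma_finite[OF \<open>finite \<Gamma>\<close>]) (simp add: row_sum_def row)
  moreover have "((\<lambda>(i, j). f (j, i)) has_sum sum col_sum \<Gamma>) (\<Gamma> \<times> (- \<Gamma>))"
    by (rule has_sum_Sigma_finite[OF \<open>finite \<Gamma>\<close>]) (simp add: col_sum_def col)
  then have "(f has_sum sum col_sum \<Gamma>) ((- \<Gamma>) \<times> \<Gamma>)"
    using has_sum_swap by blast
  ultimately have "(f has_sum sum row_sum \<Gamma> + sum col_sum \<Gamma>) (\<Gamma> \<times> UNIV \<union> (- \<Gamma>) \<times> \<Gamma>)"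
    by (rule has_sum_Un_disjoint) auto
  moreover have "UNIV - (- \<Gamma>) \<times> (- \<Gamma>) = \<Gamma> \<times> UNIV \<union> (- \<Gamma>) \<times> \<Gamma>" by auto
  ultimately have "infsum f (UNIV - (- \<Gamma>) \<times> (- \<Gamma>)) = sum row_sum \<Gamma> + sum col_sum \<Gamma>"
    by (simp add: infsumI)
  moreover have "(\<Sum>i\<in>\<Gamma>. h i * v i) = s * sum h \<Gamma>"
    unfolding v_def by (simp add: sum_distrib_left mult.commute)
  ultimately have "Ham J h \<Gamma> v = sum row_sum \<Gamma> + sum col_sum \<Gamma> + s * sum h \<Gamma>"
    unfolding Ham_def f_def by simp
  also have "sum row_sum \<Gamma> + sum col_sum \<Gamma> \<le> 4 * (\<Sum>i\<in>\<Gamma>. infsum (J i) (- \<Gamma>))"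
    using sum_mono[of \<Gamma> row_sum, OF row_sum_le] sum_mono[of \<Gamma> col_sum, OF col_sum_le]
    by (simp add: sum_distrib_left[symmetric])
  finally show ?thesis by simp
qed

lemma Ham_minimizer_le_boundary_interaction:
  assumes J: "kernel_ok lam Lam J" and "finite \<Gamma>" and u: "minimizer J h \<Gamma> u"
  shows "Ham J h \<Gamma> u \<le> 4 * (\<Sum>i\<in>\<Gamma>. infsum (J i) (- \<Gamma>))"
proof -
  define s where "s = (if sum h \<Gamma> \<le> 0 then 1 else -1 :: real)"
  define v where "v = (\<lambda>i. if i \<in> \<Gamma> then s else u i)"
  have "config u" using u unfolding minimizer_def by blast
  then have "config v" unfolding config_def v_def s_def by auto
  then have "Ham J h \<Gamma> u \<le> Ham J h \<Gamma> v"
    using u unfolding minimizer_def v_def by auto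
  also have "\<dots> \<le> 4 * (\<Sum>i\<in>\<Gamma>. infsum (J i) (- \<Gamma>)) + s * sum h \<Gamma>"
    unfolding v_def by (rule Ham_constant_on_le[OF J \<open>finite \<Gamma>\<close> \<open>config u\<close>]) (simp add: s_def)
  also have "s * sum h \<Gamma> \<le> 0" unfolding s_def by auto
  finally show ?thesis by simp
qed

lemma boundary_interaction_cube_le:
  fixes q :: "int ^ 'd::finite"
  assumes J: "kernel_ok lam Lam J" and "l \<ge> 1"
  shows "(\<Sum>i\<in>cube l q. infsum (J i) (- cube l q))
    \<le> 4 * real CARD('d) * 3 ^ (CARD('d) - 1) * real l ^ (CARD('d) - 1) * (\<Sum>m=1..l. sigmaJ J m)"
proof -
  let ?S = "\<Sum>m=1..l. sigmaJ J m"
  have "(\<Sum>i\<in>cube l q. infsum (J i) (- cube l q))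
      \<le> (\<Sum>i\<in>cube l q. \<Sum>c\<in>UNIV. sigmaJ J (cube_depth l (i $ c - q $ c)))"
    by (intro sum_mono infsum_outside_cube_le[OF J])
  also have "\<dots> = (\<Sum>c\<in>UNIV. \<Sum>i\<in>cube l q. sigmaJ J (cube_depth l (i $ c - q $ c)))"
    by (rule sum.swap)
  also have "\<dots> \<le> (\<Sum>c\<in>(UNIV :: 'd set). 4 * (2 * real l + 1) ^ (CARD('d) - 1) * ?S)"
    by (intro sum_mono sum_cube_depth_le sigmaJ_nonneg[OF J] \<open>l \<ge> 1\<close>)
  also have "\<dots> = 4 * real CARD('d) * (2 * real l + 1) ^ (CARD('d) - 1) * ?S"
    by simp
  also have "(2 * real l + 1) ^ (CARD('d) - 1) \<le> 3 ^ (CARD('d) - 1) * real l ^ (CARD('d) - 1)"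
    using power_mono[of "2 * real l + 1" "3 * real l"] \<open>l \<ge> 1\<close> by (simp add: power_mult_distrib)
  finally show ?thesis
    using sum_nonneg[of "{1..l}" "sigmaJ J", OF sigmaJ_nonneg[OF J]]
    by (simp add: mult_left_mono mult_right_mono mult.assoc)
qed

lemma Ham_minimizer_cube_le:
  fixes q :: "int ^ 'd::finite"
  assumes J: "kernel_ok lam Lam J" and "l \<ge> 1" and u: "minimizer J h (cube l q) u"
  shows "Ham J h (cube l q) u
    \<le> 16 * real CARD('d) * 3 ^ (CARD('d) - 1) * real l ^ (CARD('d) - 1) * (1 + (\<Sum>m=1..l. sigmaJ J m))"
proof -
  let ?K = "16 * real CARD('d) * 3 ^ (CARD('d) - 1) * real l ^ (CARD('d) - 1)"
  have "Ham J h (cube l q) u \<le> 4 * (\<Sum>i\<in>cube l q. infsum (J i) (- cube l q))"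
    by (rule Ham_minimizer_le_boundary_interaction[OF J finite_cube u])
  also have "\<dots> \<le> ?K * (\<Sum>m=1..l. sigmaJ J m)"
    using boundary_interaction_cube_le[OF J \<open>l \<ge> 1\<close>, of q] by (simp add: mult_ac)
  also have "\<dots> \<le> ?K * (1 + (\<Sum>m=1..l. sigmaJ J m))"
    by (rule mult_left_mono) auto
  finally show ?thesis .
qed

theorem mainTheorem8:
  assumes "CARD('d::finite) \<ge> 2"
  shows
   "(\<forall>\<mu> > 0. \<forall>\<tau>::nat. \<tau> \<ge> 1 \<longrightarrow>
      (\<exists>C\<ge>1. \<forall>(lam::real) Lam (J :: int ^ 'd \<Rightarrow> int ^ 'd \<Rightarrow> real) h q l u.
         0 < lam \<longrightarrow> lam \<le> Lam \<longrightarrow> kernel_ok lam Lam J \<longrightarrow> field_ok \<mu> \<tau> h \<longrightarrow>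
         l \<ge> 1 \<longrightarrow> minimizer J h (cube l q) u \<longrightarrow>
         Ham J h (cube l q) u
           \<le> C * real l ^ (CARD('d) - 1) * (1 + (\<Sum>m=1..l. sigmaJ J m))))
    \<and>
    (\<exists>C\<ge>1. \<forall>(\<mu>::real) (\<tau>::nat) (lam::real) Lam (J :: int ^ 'd \<Rightarrow> int ^ 'd \<Rightarrow> real) h q l u.
         0 < \<mu> \<longrightarrow> \<tau> \<ge> 1 \<longrightarrow>
         0 < lam \<longrightarrow> lam \<le> Lam \<longrightarrow> kernel_ok lam Lam J \<longrightarrow> field_ok \<mu> \<tau> h \<longrightarrow>
         (\<forall>i\<in>cube l q. h i = 0) \<longrightarrow>
         l \<ge> 1 \<longrightarrow> minimizer J h (cube l q) u \<longrightarrow>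
         Ham J h (cube l q) u
           \<le> C * real l ^ (CARD('d) - 1) * (1 + (\<Sum>m=1..l. sigmaJ J m)))"
proof -
  let ?C = "16 * real CARD('d) * 3 ^ (CARD('d) - 1) :: real"
  have "(1 :: real) \<le> real CARD('d)" and "(1 :: real) \<le> 3 ^ (CARD('d) - 1)" by simp_all
  then have "(1 :: real) \<le> real CARD('d) * 3 ^ (CARD('d) - 1)"
    by (metis mult_mono' mult_1 zero_le_one)
  then have C_ge_1: "?C \<ge> 1" by simp
  have bound: "Ham J h (cube l q) u
      \<le> ?C * real l ^ (CARD('d) - 1) * (1 + (\<Sum>m=1..l. sigmaJ J m))"
    if "kernel_ok lam Lam J" "l \<ge> 1" "minimizer J h (cube l q) u"
    for lam Lam and J :: "int ^ 'd \<Rightarrow> int ^ 'd \<Rightarrow> real" and h q l u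
    using Ham_minimizer_cube_le[OF that] .
  show ?thesis
    by (intro conjI allI impI exI[of _ ?C] C_ge_1; rule bound; assumption)
qed

end
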